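(* Let $P$ be a finite poset. Then $S_N(S_N(P))$ is $N$-free. Moreover, $S_N(S_N(P))$ is the smallest $N$-free poset obtained as a barycentric subdivision of $\mathrm{Diag}(P)$: every $N$-free poset $Q$ obtained from a barycentric subdivision of $\mathrm{Diag}(P)$ contains $S_N(S_N(P))$, in the sense that every edge of $\mathrm{Diag}(P)$ on which a vertex is added in $S_N(S_N(P))$ also receives at least one added vertex in $Q$.
   Context: For a poset $P$, a covering pair is a pair $(x,y)$ with $x<y$ and no $z$ with $x<z<y$; we write $x\prec y$. $\mathrm{Diag}(P)$ is the directed graph on $P$ whose edges are the covering pairs. $\mathrm{Inc}(P)$ is the set of pairs of incomparable elements. Four elements $a,b,c,d$ of $P$ form an $N$ in $P$ if $b\prec c$, $a\prec c$, $b\prec d$ and $(a,d)\in\mathrm{Inc}(P)$; the pair $(b,c)$ is then the diagonal edge of this $N$. $P$ is $N$-free if it contains no $N$. $N_{diag}(P)$ denotes the set of diagonal edges of all $N$'s in $P$. A barycentric subdivision of $\mathrm{Diag}(P)$ consists of adding finitely many (possibly zero) new vertices on each edge of $\mathrm{Diag}(P)$ (a new vertex $u$ on edge $(x,y)$ subdivides it into $x\prec u\prec y$, several added vertices forming a chain); the resulting vertex set with the induced order (transitive closure) is a poset containing $P$ as a subposet. $S_N(P)$ is the poset obtained from $P$ by adding one new (dummy) vertex on each edge of $N_{diag}(P)$. *)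

theory Defs
  imports Main
begin

text \<open>A poset is a carrier set together with a (reflexive) order relation on it,
  required to satisfy the library predicate partial_order_on.\<close>
type_synonym 'a poset = "'a set \<times> 'a rel"

definition pless :: "'a poset \<Rightarrow> 'a \<Rightarrow> 'a \<Rightarrow> bool" where
  "pless P x y \<longleftrightarrow> (x, y) \<in> snd P \<and> x \<noteq> y"

definition covers :: "'a poset \<Rightarrow> 'a \<Rightarrow> 'a \<Rightarrow> bool" where
  "covers P x y \<longleftrightarrow> x \<in> fst P \<and> y \<in> fst P \<and> pless P x y \<and>
     \<not> (\<exists>z \<in> fst P. pless P x z \<and> pless P z y)"

definition Diag :: "'a poset \<Rightarrow> 'a rel" where
  "Diag P = {(x, y). covers P x y}"

definition Inc :: "'a poset \<Rightarrow> 'a rel" where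
  "Inc P = {(x, y). x \<in> fst P \<and> y \<in> fst P \<and> (x, y) \<notin> snd P \<and> (y, x) \<notin> snd P}"

definition is_N :: "'a poset \<Rightarrow> 'a \<Rightarrow> 'a \<Rightarrow> 'a \<Rightarrow> 'a \<Rightarrow> bool" where
  "is_N P a b c d \<longleftrightarrow> covers P b c \<and> covers P a c \<and> covers P b d \<and> (a, d) \<in> Inc P"

definition N_free :: "'a poset \<Rightarrow> bool" where
  "N_free P \<longleftrightarrow> \<not> (\<exists>a b c d. is_N P a b c d)"

definition N_diag :: "'a poset \<Rightarrow> 'a rel" where
  "N_diag P = {(b, c). \<exists>a d. is_N P a b c d}"

text \<open>Barycentric subdivision of Diag P, adding k (x,y) new vertices on each
  covering edge (x,y). Old vertices are Inl x; the i-th new vertex on edge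
  (x,y) is Inr (x,y,i), 1 \<le> i \<le> k (x,y). The chain on edge (x,y) is
  x = node 0, node 1, ..., node (k+1) = y.\<close>
definition sd_node :: "('a \<times> 'a \<Rightarrow> nat) \<Rightarrow> 'a \<Rightarrow> 'a \<Rightarrow> nat \<Rightarrow> 'a + ('a \<times> 'a \<times> nat)" where
  "sd_node k x y i = (if i = 0 then Inl x else if i = Suc (k (x, y)) then Inl y else Inr (x, y, i))"

definition sd_carrier :: "'a poset \<Rightarrow> ('a \<times> 'a \<Rightarrow> nat) \<Rightarrow> ('a + ('a \<times> 'a \<times> nat)) set" where
  "sd_carrier P k = Inl ` fst P \<union>
     {Inr (x, y, i) | x y i. (x, y) \<in> Diag P \<and> 1 \<le> i \<and> i \<le> k (x, y)}"

definition sd_edges :: "'a poset \<Rightarrow> ('a \<times> 'a \<Rightarrow> nat) \<Rightarrow> ('a + ('a \<times> 'a \<times> nat)) rel" where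
  "sd_edges P k = {(sd_node k x y i, sd_node k x y (Suc i)) | x y i. (x, y) \<in> Diag P \<and> i \<le> k (x, y)}"

definition subdiv :: "'a poset \<Rightarrow> ('a \<times> 'a \<Rightarrow> nat) \<Rightarrow> ('a + ('a \<times> 'a \<times> nat)) poset" where
  "subdiv P k = (sd_carrier P k, Id_on (sd_carrier P k) \<union> (sd_edges P k)\<^sup>+)"

definition SN :: "'a poset \<Rightarrow> ('a + ('a \<times> 'a \<times> nat)) poset" where
  "SN P = subdiv P (\<lambda>e. if e \<in> N_diag P then 1 else 0)"

end

theory Submission
  imports Defs
begin

(* Call a covering edge (b, c) of P N-clean if it is not an N-diagonal and, for every
   N-configuration a < c, b < d around it, neither side (a, c) nor (b, d) is an N-diagonal.
   Subdividing the edges of Diag(P) creates an N exactly on an N-configuration of P whose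
   diagonal stays unsubdivided while a side is subdivided or a <= d fails. Hence the
   N-diagonals of S_N(P) are the edges that are neither N-diagonals of P nor N-clean, and
   S_N(Q) is N-free iff every edge of Q that is not an N-diagonal is N-clean. Cleanness
   passes from an edge to both sides of every N-configuration around it (a case analysis
   in P for one side, order duality for the other), so S_N(S_N(P)) is N-free. Conversely,
   an N-free subdivision must subdivide every N-diagonal and therefore every edge that is
   not N-clean, and every edge subdivided in S_N(S_N(P)) is of this kind. *)

definition N_config :: "'a poset \<Rightarrow> 'a \<Rightarrow> 'a \<Rightarrow> 'a \<Rightarrow> 'a \<Rightarrow> bool" where
  "N_config P a b c d \<longleftrightarrow>
     covers P b c \<and> covers P a c \<and> covers P b d \<and> a \<noteq> b \<and> d \<noteq> c"

definition N_clean :: "'a poset \<Rightarrow> 'a \<Rightarrow> 'a \<Rightarrow> bool" where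
  "N_clean P b c \<longleftrightarrow> (\<forall>a d. N_config P a b c d \<longrightarrow>
     (a, c) \<notin> N_diag P \<and> (b, d) \<notin> N_diag P \<and> (a, d) \<in> snd P)"

lemma covers_converse: "covers (A, r\<inverse>) x y \<longleftrightarrow> covers (A, r) y x"
  unfolding covers_def pless_def by auto

lemma N_config_converse: "N_config (A, r\<inverse>) a b c d \<longleftrightarrow> N_config (A, r) d c b a"
  unfolding N_config_def covers_converse by auto

lemma is_N_converse: "is_N (A, r\<inverse>) a b c d \<longleftrightarrow> is_N (A, r) d c b a"
  unfolding is_N_def Inc_def covers_converse by auto

lemma N_diag_converse: "N_diag (A, r\<inverse>) = (N_diag (A, r))\<inverse>"
  unfolding N_diag_def is_N_converse by auto

lemma N_clean_converse: "N_clean (A, r\<inverse>) b c \<longleftrightarrow> N_clean (A, r) c b"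
  unfolding N_clean_def N_config_converse N_diag_converse by auto

locale finite_poset =
  fixes A :: "'a set" and r :: "'a rel"
  assumes finite_carrier: "finite A" and partial_order: "partial_order_on A r"
begin

lemma in_carrier: "(x, y) \<in> r \<Longrightarrow> x \<in> A \<and> y \<in> A"
  using partial_order unfolding partial_order_on_def preorder_on_def refl_on_def by blast

lemma refl: "x \<in> A \<Longrightarrow> (x, x) \<in> r"
  using partial_order unfolding partial_order_on_def preorder_on_def refl_on_def by blast

lemma trans: "(x, y) \<in> r \<Longrightarrow> (y, z) \<in> r \<Longrightarrow> (x, z) \<in> r"
  using partial_order unfolding partial_order_on_def preorder_on_def trans_def by blast

lemma antisym: "(x, y) \<in> r \<Longrightarrow> (y, x) \<in> r \<Longrightarrow> x = y"
  using partial_order unfolding partial_order_on_def antisym_def by blast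

lemma covers_iff:
  "covers (A, r) x y \<longleftrightarrow>
     (x, y) \<in> r \<and> x \<noteq> y \<and> (\<forall>z. (x, z) \<in> r \<longrightarrow> (z, y) \<in> r \<longrightarrow> z = x \<or> z = y)"
  unfolding covers_def pless_def using in_carrier by auto

lemma covers_in_carrier: "covers (A, r) x y \<Longrightarrow> x \<in> A \<and> y \<in> A"
  unfolding covers_def by simp

lemma finite_acyclic_strict: "finite (r - Id)" "acyclic (r - Id)"
proof -
  have "r - Id \<subseteq> A \<times> A" using in_carrier by auto
  then show "finite (r - Id)" using finite_carrier by (auto intro: finite_subset)
  have "trans (r - Id)" by (auto intro!: transI intro: trans dest: antisym)
  then show "acyclic (r - Id)" unfolding acyclic_def by simp
qed

lemma cover_above:
  assumes "(x, y) \<in> r" "x \<noteq> y"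
  obtains z where "covers (A, r) x z" "(z, y) \<in> r"
proof -
  let ?between = "{z. (x, z) \<in> r - Id \<and> (z, y) \<in> r}"
  have "wf (r - Id)" using finite_acyclic_strict by (rule finite_acyclic_wf)
  moreover have "y \<in> ?between" using assms in_carrier refl by auto
  ultimately obtain z where z: "z \<in> ?between" and min: "\<And>w. (w, z) \<in> r - Id \<Longrightarrow> w \<notin> ?between"
    by (rule wfE_min) blast+
  have "covers (A, r) x z"
    unfolding covers_iff using z min by (auto intro: trans)
  with z that show thesis by simp
qed

lemma less_imp_Diag_trancl: "(x, y) \<in> r \<Longrightarrow> x \<noteq> y \<Longrightarrow> (x, y) \<in> (Diag (A, r))\<^sup>+"
proof (induction x rule: wf_induct_rule[OF finite_acyclic_wf_converse[OF finite_acyclic_strict]])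
  case (1 x)
  from 1(2,3) obtain z where z: "covers (A, r) x z" "(z, y) \<in> r" by (rule cover_above)
  then have "(x, z) \<in> Diag (A, r)" unfolding Diag_def by simp
  moreover have "z = y \<or> (z, y) \<in> (Diag (A, r))\<^sup>+"
    using 1 z by (auto simp: covers_iff)
  ultimately show ?case by auto
qed

lemma is_N_iff: "is_N (A, r) a b c d \<longleftrightarrow> N_config (A, r) a b c d \<and> (a, d) \<notin> r"
  unfolding is_N_def N_config_def Inc_def using in_carrier
  by (auto simp: covers_iff) (meson trans antisym)+

lemma N_config_imp_le: "N_config (A, r) a b c d \<Longrightarrow> (b, c) \<notin> N_diag (A, r) \<Longrightarrow> (a, d) \<in> r"
  unfolding N_diag_def is_N_iff by blast

lemma N_diag_imp_not_N_clean: "(b, c) \<in> N_diag (A, r) \<Longrightarrow> \<not> N_clean (A, r) b c"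
  unfolding N_diag_def N_clean_def is_N_iff by auto

lemma N_clean_imp_not_N_diag: "N_clean (A, r) b c \<Longrightarrow> (b, c) \<notin> N_diag (A, r)"
  using N_diag_imp_not_N_clean by blast

lemma covers_of_sibling:
  assumes "(b, c) \<notin> N_diag (A, r)" "covers (A, r) b c" "covers (A, r) a c" "a \<noteq> b"
    and "covers (A, r) a e" "(b, e) \<in> r"
  shows "covers (A, r) b e"
proof -
  have "b \<noteq> e" using assms(2,3,5) by (metis covers_iff)
  with assms(6) obtain f where f: "covers (A, r) b f" "(f, e) \<in> r" by (rule cover_above)
  show ?thesis
  proof (cases "f = c")
    case True
    then show ?thesis using assms(3,5) f by (metis covers_iff)
  next
    case False
    then have "N_config (A, r) a b c f" using assms(2-4) f(1) unfolding N_config_def by blast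
    then have "(a, f) \<in> r" using assms(1) by (rule N_config_imp_le)
    then have "f = a \<or> f = e" using f(2) assms(5) covers_iff by blast
    then show ?thesis using f assms(2,3) by (metis covers_iff)
  qed
qed

lemma N_clean_left:
  assumes clean: "N_clean (A, r) b c" and abcd: "N_config (A, r) a b c d"
  shows "N_clean (A, r) a c"
  unfolding N_clean_def snd_conv
proof (intro allI impI conjI)
  fix a' d' assume a'acd': "N_config (A, r) a' a c d'"
  have bc: "(b, c) \<notin> N_diag (A, r)" using clean by (rule N_clean_imp_not_N_diag)
  have ac: "(a, c) \<notin> N_diag (A, r)" using clean abcd unfolding N_clean_def snd_conv by blast
  then show "(a', d') \<in> r" using a'acd' by (rule N_config_imp_le[rotated])
  show "(a', c) \<notin> N_diag (A, r)"
  proof (cases "a' = b")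
    case False
    then have "N_config (A, r) a' b c d" using abcd a'acd' unfolding N_config_def by blast
    then show ?thesis using clean unfolding N_clean_def snd_conv by blast
  qed (use bc in simp)
  (* As neither (b, c) nor (a, c) is an N-diagonal, every upper cover of a other than c
     covers b too; so an N with diagonal (a, d') would yield one with diagonal (b, d'). *)
  have covers_b: "covers (A, r) b e" if "covers (A, r) a e" "e \<noteq> c" for e
  proof -
    have "N_config (A, r) b a c e" using abcd that unfolding N_config_def by blast
    then have "(b, e) \<in> r" using ac by (rule N_config_imp_le)
    then show ?thesis using covers_of_sibling[OF bc] abcd that unfolding N_config_def by blast
  qed
  show "(a, d') \<notin> N_diag (A, r)"
  proof
    assume "(a, d') \<in> N_diag (A, r)"
    then obtain a'' d'' where N: "N_config (A, r) a'' a d' d''" "(a'', d'') \<notin> r"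
      unfolding N_diag_def is_N_iff by blast
    have bd': "covers (A, r) b d'" using covers_b a'acd' unfolding N_config_def by blast
    have bd'': "covers (A, r) b d''"
      using covers_b[of d''] N(1) abcd unfolding N_config_def by blast
    have "a'' \<noteq> b" using N(2) bd'' covers_iff by blast
    then have "is_N (A, r) a'' b d' d''" using N bd' bd'' unfolding is_N_iff N_config_def by blast
    moreover have "N_config (A, r) a b c d'" using abcd a'acd' bd' unfolding N_config_def by blast
    ultimately show False using clean unfolding N_clean_def snd_conv N_diag_def by blast
  qed
qed

end

lemma (in finite_poset) N_clean_right:
  assumes "N_clean (A, r) b c" and "N_config (A, r) a b c d"
  shows "N_clean (A, r) b d"
proof -
  interpret dual: finite_poset A "r\<inverse>"
    using finite_carrier partial_order by unfold_locales simp_all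
  show ?thesis
    using dual.N_clean_left assms by (simp add: N_clean_converse N_config_converse)
qed

locale subdivision = finite_poset A r for A :: "'a set" and r +
  fixes k :: "'a \<times> 'a \<Rightarrow> nat"
begin

abbreviation "V \<equiv> sd_carrier (A, r) k"
abbreviation "E \<equiv> sd_edges (A, r) k"
abbreviation "S \<equiv> subdiv (A, r) k"

fun sd_less :: "'a + ('a \<times> 'a \<times> nat) \<Rightarrow> 'a + ('a \<times> 'a \<times> nat) \<Rightarrow> bool" where
  "sd_less (Inl x) (Inl y) \<longleftrightarrow> (x, y) \<in> r \<and> x \<noteq> y"
| "sd_less (Inl x) (Inr (p, q, j)) \<longleftrightarrow> (x, p) \<in> r"
| "sd_less (Inr (p, q, i)) (Inl y) \<longleftrightarrow> (q, y) \<in> r"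
| "sd_less (Inr (p, q, i)) (Inr (p', q', j)) \<longleftrightarrow> (p = p' \<and> q = q' \<and> i < j) \<or> (q, p') \<in> r"

lemma Inl_in_V [simp]: "Inl x \<in> V \<longleftrightarrow> x \<in> A"
  unfolding sd_carrier_def by auto

lemma Inr_in_V [simp]: "Inr (p, q, j) \<in> V \<longleftrightarrow> covers (A, r) p q \<and> 1 \<le> j \<and> j \<le> k (p, q)"
  unfolding sd_carrier_def Diag_def by auto

lemma sd_node_in_V: "covers (A, r) x y \<Longrightarrow> i \<le> Suc (k (x, y)) \<Longrightarrow> sd_node k x y i \<in> V"
  unfolding sd_node_def using covers_in_carrier by auto

lemma E_iff:
  "(u, v) \<in> E \<longleftrightarrow> (\<exists>x y i. covers (A, r) x y \<and> i \<le> k (x, y) \<and>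
     u = sd_node k x y i \<and> v = sd_node k x y (Suc i))"
  unfolding sd_edges_def Diag_def by auto

lemma E_imp_sd_less: "(u, v) \<in> E \<Longrightarrow> u \<in> V \<and> v \<in> V \<and> sd_less u v"
  unfolding E_iff using sd_node_in_V covers_in_carrier
  by (fastforce simp: sd_node_def covers_iff refl)

lemma sd_less_trans: "u \<in> V \<Longrightarrow> v \<in> V \<Longrightarrow> w \<in> V \<Longrightarrow> sd_less u v \<Longrightarrow> sd_less v w \<Longrightarrow> sd_less u w"
  by (cases u; cases v; cases w) (auto simp: covers_iff, (meson trans antisym)+)

lemma sd_less_irrefl: "u \<in> V \<Longrightarrow> \<not> sd_less u u"
  by (cases u) (auto simp: covers_iff dest: antisym)

lemma sd_node_chain:
  assumes "covers (A, r) x y" "i < j" "j \<le> Suc (k (x, y))"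
  shows "(sd_node k x y i, sd_node k x y j) \<in> E\<^sup>+"
  using assms(2,3)
proof (induction j)
  case (Suc j)
  have step: "(sd_node k x y j, sd_node k x y (Suc j)) \<in> E"
    using assms(1) Suc.prems E_iff by auto
  show ?case
  proof (cases "i = j")
    case False
    then have "(sd_node k x y i, sd_node k x y j) \<in> E\<^sup>+" using Suc by simp
    with step show ?thesis by simp
  qed (use step in simp)
qed simp

lemma Inl_rtrancl_E: "(x, y) \<in> r \<Longrightarrow> (Inl x, Inl y) \<in> E\<^sup>*"
proof (cases "x = y")
  case False
  assume "(x, y) \<in> r"
  then have "(x, y) \<in> (Diag (A, r))\<^sup>+" using False by (rule less_imp_Diag_trancl)
  then have "(Inl x, Inl y) \<in> E\<^sup>+"
  proof (induction rule: trancl_induct)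
    case (base z)
    then show ?case using sd_node_chain[of x z 0 "Suc (k (x, z))"] by (simp add: Diag_def sd_node_def)
  next
    case (step z w)
    then have "(Inl z, Inl w) \<in> E\<^sup>+"
      using sd_node_chain[of z w 0 "Suc (k (z, w))"] by (simp add: Diag_def sd_node_def)
    with step.IH show ?case by simp
  qed
  then show ?thesis by simp
qed simp

lemma Inl_E_trancl_Inr: "Inr (p, q, j) \<in> V \<Longrightarrow> (Inl p, Inr (p, q, j)) \<in> E\<^sup>+"
  using sd_node_chain[of p q 0 j] by (auto simp: sd_node_def)

lemma Inr_E_trancl_Inl: "Inr (p, q, j) \<in> V \<Longrightarrow> (Inr (p, q, j), Inl q) \<in> E\<^sup>+"
  using sd_node_chain[of p q j "Suc (k (p, q))"] by (auto simp: sd_node_def)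

lemma trancl_E_iff: "(u, v) \<in> E\<^sup>+ \<longleftrightarrow> u \<in> V \<and> v \<in> V \<and> sd_less u v"
proof
  show "(u, v) \<in> E\<^sup>+ \<Longrightarrow> u \<in> V \<and> v \<in> V \<and> sd_less u v"
    by (induction rule: trancl_induct) (auto dest: E_imp_sd_less intro: sd_less_trans)
next
  assume uv: "u \<in> V \<and> v \<in> V \<and> sd_less u v"
  then show "(u, v) \<in> E\<^sup>+"
  proof (cases "(u, v)" rule: sd_less.cases)
    case (1 x y)
    then show ?thesis using uv Inl_rtrancl_E[of x y] by (auto simp: rtrancl_eq_or_trancl)
  next
    case (2 x p q j)
    then show ?thesis using uv Inl_rtrancl_E[of x p] Inl_E_trancl_Inr[of p q j] by auto
  next
    case (3 p q i y)
    then show ?thesis using uv Inr_E_trancl_Inl[of p q i] Inl_rtrancl_E[of q y] by auto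
  next
    case (4 p q i p' q' j)
    then show ?thesis
      using uv sd_node_chain[of p q i j] Inr_E_trancl_Inl[of p q i] Inl_rtrancl_E[of q p']
        Inl_E_trancl_Inr[of p' q' j]
      by (auto simp: sd_node_def intro: trancl_trans)
  qed
qed

lemma subdiv_order_iff: "(u, v) \<in> snd S \<longleftrightarrow> u \<in> V \<and> v \<in> V \<and> (u = v \<or> sd_less u v)"
  unfolding subdiv_def using trancl_E_iff by auto

lemma finite_V: "finite V"
proof -
  have "Diag (A, r) \<subseteq> A \<times> A" unfolding Diag_def using covers_in_carrier by auto
  then have "finite (SIGMA e:Diag (A, r). {1..k e})"
    using finite_carrier by (auto intro: finite_subset)
  moreover have "V \<subseteq> Inl ` A \<union> (\<lambda>((x, y), i). Inr (x, y, i)) ` (SIGMA e:Diag (A, r). {1..k e})"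
    unfolding sd_carrier_def by force
  ultimately show ?thesis using finite_carrier by (auto intro: finite_subset)
qed

lemma finite_poset_subdiv: "finite_poset V (snd S)"
proof
  show "finite V" by (rule finite_V)
  show "partial_order_on V (snd S)"
    unfolding partial_order_on_def preorder_on_def refl_on_def trans_def antisym_def
    by (auto simp: subdiv_order_iff intro: sd_less_trans dest: sd_less_irrefl)
qed

lemma fst_subdiv [simp]: "fst S = V"
  unfolding subdiv_def by simp

lemma pless_subdiv_iff: "pless S u v \<longleftrightarrow> u \<in> V \<and> v \<in> V \<and> sd_less u v"
  unfolding pless_def subdiv_order_iff using sd_less_irrefl by auto

lemma no_vertex_inside_edge:
  assumes xy: "covers (A, r) x y" and "i \<le> k (x, y)" and "z \<in> V"
    and "sd_less (sd_node k x y i) z" and "sd_less z (sd_node k x y (Suc i))"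
  shows False
proof -
  have between: "w = x \<or> w = y" if "(x, w) \<in> r" "(w, y) \<in> r" for w
    using xy that covers_iff by blast
  have "(x, y) \<in> r" "x \<noteq> y" using xy covers_iff by auto
  show False
  proof (cases z)
    case (Inl w)
    then show False using assms between \<open>(x, y) \<in> r\<close> \<open>x \<noteq> y\<close>
      by (auto simp: sd_node_def split: if_splits dest: antisym) (meson trans antisym)+
  next
    case (Inr t)
    then obtain p q j where z: "z = Inr (p, q, j)" by (cases t) auto
    then have "(p, q) \<in> r" "p \<noteq> q" using assms(3) covers_iff by auto
    then have "p = x \<and> q = y" if "(x, p) \<in> r" "(q, y) \<in> r"
      using that between trans antisym by metis
    then show False using assms z \<open>(x, y) \<in> r\<close> \<open>x \<noteq> y\<close>
      by (auto simp: sd_node_def split: if_splits dest: antisym intro: trans)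
  qed
qed

lemma covers_subdiv_iff: "covers S u v \<longleftrightarrow> (u, v) \<in> E"
proof
  assume uv: "covers S u v"
  then have "(u, v) \<in> E\<^sup>+" unfolding covers_def using pless_subdiv_iff trancl_E_iff by auto
  then show "(u, v) \<in> E"
  proof (cases rule: tranclE)
    case (step z)
    then have "z \<in> V" "sd_less u z" "sd_less z v" using trancl_E_iff E_imp_sd_less by blast+
    then show ?thesis using uv unfolding covers_def pless_subdiv_iff by auto
  qed
next
  assume uv: "(u, v) \<in> E"
  then obtain x y i where edge: "covers (A, r) x y" "i \<le> k (x, y)"
    and "u = sd_node k x y i" "v = sd_node k x y (Suc i)"
    using E_iff by blast
  then show "covers S u v"
    using E_imp_sd_less[OF uv] no_vertex_inside_edge[OF edge]
    unfolding covers_def[of S] pless_subdiv_iff by auto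
qed

lemma E_from_Inr: "(Inr (p, q, j), v) \<in> E \<Longrightarrow> v = sd_node k p q (Suc j)"
  unfolding E_iff sd_node_def by (auto split: if_splits)

lemma E_to_Inr: "(v, Inr (p, q, j)) \<in> E \<Longrightarrow> v = sd_node k p q (j - 1)"
  unfolding E_iff sd_node_def by (auto split: if_splits)

lemma E_from_Inl: "(Inl b, v) \<in> E \<longleftrightarrow> (\<exists>d. covers (A, r) b d \<and> v = sd_node k b d 1)"
proof
  show "(Inl b, v) \<in> E \<Longrightarrow> \<exists>d. covers (A, r) b d \<and> v = sd_node k b d 1"
    unfolding E_iff sd_node_def by (auto split: if_splits)
  show "\<exists>d. covers (A, r) b d \<and> v = sd_node k b d 1 \<Longrightarrow> (Inl b, v) \<in> E"
    unfolding E_iff by (metis One_nat_def sd_node_def zero_le)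
qed

lemma E_to_Inl: "(v, Inl c) \<in> E \<longleftrightarrow> (\<exists>a. covers (A, r) a c \<and> v = sd_node k a c (k (a, c)))"
proof
  show "(v, Inl c) \<in> E \<Longrightarrow> \<exists>a. covers (A, r) a c \<and> v = sd_node k a c (k (a, c))"
    unfolding E_iff sd_node_def by (auto split: if_splits)
  show "\<exists>a. covers (A, r) a c \<and> v = sd_node k a c (k (a, c)) \<Longrightarrow> (v, Inl c) \<in> E"
    unfolding E_iff by (metis le_refl sd_node_def nat.distinct(1))
qed

lemma Inl_E_Inl: "(Inl b, Inl c) \<in> E \<longleftrightarrow> covers (A, r) b c \<and> k (b, c) = 0"
  unfolding E_iff sd_node_def by (auto split: if_splits)

end

sublocale subdivision \<subseteq> sd: finite_poset "sd_carrier (A, r) k" "snd (subdiv (A, r) k)"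
  by (rule finite_poset_subdiv)

context subdivision
begin

lemma subdiv_eq: "S = (V, snd S)"
  by (simp add: prod_eq_iff)

lemma N_config_subdiv_iff:
  "N_config S a' b' c' d' \<longleftrightarrow> (\<exists>a b c d. b' = Inl b \<and> c' = Inl c \<and>
     a' = sd_node k a c (k (a, c)) \<and> d' = sd_node k b d 1 \<and> N_config (A, r) a b c d \<and> k (b, c) = 0)"
proof
  assume "N_config S a' b' c' d'"
  then have E: "(b', c') \<in> E" "(a', c') \<in> E" "(b', d') \<in> E" and "a' \<noteq> b'" "d' \<noteq> c'"
    unfolding N_config_def covers_subdiv_iff by auto
  obtain b where b: "b' = Inl b"
  proof (cases b')
    case (Inr t)
    then obtain p q j where "b' = Inr (p, q, j)" by (cases t) auto
    then show ?thesis using E(1,3) E_from_Inr \<open>d' \<noteq> c'\<close> by metis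
  qed
  obtain c where c: "c' = Inl c"
  proof (cases c')
    case (Inr t)
    then obtain p q j where "c' = Inr (p, q, j)" by (cases t) auto
    then show ?thesis using E(1,2) E_to_Inr \<open>a' \<noteq> b'\<close> by metis
  qed
  have bc: "covers (A, r) b c" "k (b, c) = 0" using E(1) b c Inl_E_Inl by auto
  obtain a where a: "covers (A, r) a c" "a' = sd_node k a c (k (a, c))" using E(2) c E_to_Inl by blast
  obtain d where d: "covers (A, r) b d" "d' = sd_node k b d 1" using E(3) b E_from_Inl by blast
  have "a \<noteq> b" using a b bc \<open>a' \<noteq> b'\<close> by (auto simp: sd_node_def)
  moreover have "d \<noteq> c" using d c bc \<open>d' \<noteq> c'\<close> by (auto simp: sd_node_def)
  ultimately show "\<exists>a b c d. b' = Inl b \<and> c' = Inl c \<and> a' = sd_node k a c (k (a, c)) \<and>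
      d' = sd_node k b d 1 \<and> N_config (A, r) a b c d \<and> k (b, c) = 0"
    using a b c d bc unfolding N_config_def by blast
next
  assume "\<exists>a b c d. b' = Inl b \<and> c' = Inl c \<and> a' = sd_node k a c (k (a, c)) \<and>
      d' = sd_node k b d 1 \<and> N_config (A, r) a b c d \<and> k (b, c) = 0"
  then obtain a b c d where nodes: "b' = Inl b" "c' = Inl c" "a' = sd_node k a c (k (a, c))"
      "d' = sd_node k b d 1" and abcd: "N_config (A, r) a b c d" and "k (b, c) = 0"
    by blast
  then have "(b', c') \<in> E" "(a', c') \<in> E" "(b', d') \<in> E"
    unfolding N_config_def using Inl_E_Inl E_to_Inl E_from_Inl by auto
  moreover have "a' \<noteq> b'" "d' \<noteq> c'"
    using abcd nodes unfolding N_config_def by (auto simp: sd_node_def)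
  ultimately show "N_config S a' b' c' d'"
    unfolding N_config_def covers_subdiv_iff by blast
qed

lemma N_config_subdiv_order:
  assumes "N_config (A, r) a b c d"
  shows "(sd_node k a c (k (a, c)), sd_node k b d 1) \<in> snd S \<longleftrightarrow>
      k (a, c) = 0 \<and> k (b, d) = 0 \<and> (a, d) \<in> r"
proof -
  have bc: "covers (A, r) b c" and ac: "covers (A, r) a c" and bd: "covers (A, r) b d"
    and "a \<noteq> b" "d \<noteq> c"
    using assms unfolding N_config_def by auto
  have "(c, d) \<notin> r" using bc bd \<open>d \<noteq> c\<close> unfolding covers_iff by (blast intro: trans)
  moreover have "(a, b) \<notin> r" using bc ac \<open>a \<noteq> b\<close> unfolding covers_iff by (blast intro: trans)
  moreover have "(c, b) \<notin> r" using bc unfolding covers_iff by (meson antisym)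
  moreover have "sd_node k a c (k (a, c)) \<in> V" "sd_node k b d 1 \<in> V"
    using ac bd sd_node_in_V by auto
  moreover have "sd_node k a c (k (a, c)) = (if k (a, c) = 0 then Inl a else Inr (a, c, k (a, c)))"
    "sd_node k b d 1 = (if k (b, d) = 0 then Inl d else Inr (b, d, 1))"
    by (simp_all add: sd_node_def)
  ultimately show ?thesis
    using \<open>a \<noteq> b\<close> covers_in_carrier[OF ac] refl by (auto simp: subdiv_order_iff)
qed

lemma is_N_subdiv_iff:
  "is_N S a' b' c' d' \<longleftrightarrow> (\<exists>a b c d. b' = Inl b \<and> c' = Inl c \<and>
     a' = sd_node k a c (k (a, c)) \<and> d' = sd_node k b d 1 \<and> N_config (A, r) a b c d \<and>
     k (b, c) = 0 \<and> (0 < k (a, c) \<or> 0 < k (b, d) \<or> (a, d) \<notin> r))"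
    (is "_ \<longleftrightarrow> (\<exists>a b c d. ?N a b c d)")
proof
  assume "is_N S a' b' c' d'"
  then have "N_config S a' b' c' d'" and incomparable: "(a', d') \<notin> snd S"
    using sd.is_N_iff[of a' b' c' d'] by (simp_all flip: subdiv_eq)
  then obtain a b c d where nodes: "b' = Inl b" "c' = Inl c" "a' = sd_node k a c (k (a, c))"
      "d' = sd_node k b d 1" and abcd: "N_config (A, r) a b c d" and "k (b, c) = 0"
    unfolding N_config_subdiv_iff by blast
  then have "?N a b c d" using incomparable N_config_subdiv_order[OF abcd] by auto
  then show "\<exists>a b c d. ?N a b c d" by blast
next
  assume "\<exists>a b c d. ?N a b c d"
  then obtain a b c d where N: "?N a b c d" by blast
  then have "N_config S a' b' c' d'" unfolding N_config_subdiv_iff by blast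
  moreover have "(a', d') \<notin> snd S" using N N_config_subdiv_order by auto
  ultimately show "is_N S a' b' c' d'"
    using sd.is_N_iff[of a' b' c' d'] by (simp flip: subdiv_eq)
qed

lemma N_diag_subdiv_Inl_iff:
  "(Inl b, Inl c) \<in> N_diag S \<longleftrightarrow> k (b, c) = 0 \<and>
     (\<exists>a d. N_config (A, r) a b c d \<and> (0 < k (a, c) \<or> 0 < k (b, d) \<or> (a, d) \<notin> r))"
  unfolding N_diag_def is_N_subdiv_iff by auto

lemma N_free_subdiv_iff:
  "N_free S \<longleftrightarrow> (\<forall>a b c d. N_config (A, r) a b c d \<and> k (b, c) = 0 \<longrightarrow>
     k (a, c) = 0 \<and> k (b, d) = 0 \<and> (a, d) \<in> r)"
proof (intro iffI allI impI)
  fix a b c d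
  assume "N_free S" and abcd: "N_config (A, r) a b c d \<and> k (b, c) = 0"
  show "k (a, c) = 0 \<and> k (b, d) = 0 \<and> (a, d) \<in> r"
  proof (rule ccontr)
    assume "\<not> ?thesis"
    then have "0 < k (a, c) \<or> 0 < k (b, d) \<or> (a, d) \<notin> r" by auto
    with abcd have "is_N S (sd_node k a c (k (a, c))) (Inl b) (Inl c) (sd_node k b d 1)"
      unfolding is_N_subdiv_iff
      by (intro exI[of _ a] exI[of _ b] exI[of _ c] exI[of _ d]) simp
    with \<open>N_free S\<close> show False unfolding N_free_def by blast
  qed
next
  assume no_N: "\<forall>a b c d. N_config (A, r) a b c d \<and> k (b, c) = 0 \<longrightarrow>
     k (a, c) = 0 \<and> k (b, d) = 0 \<and> (a, d) \<in> r"
  show "N_free S"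
    unfolding N_free_def
  proof (intro notI, elim exE)
    fix a' b' c' d' assume "is_N S a' b' c' d'"
    then obtain a b c d where "N_config (A, r) a b c d" "k (b, c) = 0"
        "0 < k (a, c) \<or> 0 < k (b, d) \<or> (a, d) \<notin> r"
      unfolding is_N_subdiv_iff by (elim exE conjE) (rule that)
    then show False using no_N[rule_format, of a b c d] by auto
  qed
qed

lemma subdivided_if_between:
  assumes "covers (A, r) x y" "pless S (Inl x) u" "pless S u (Inl y)"
  shows "0 < k (x, y)"
proof (rule ccontr)
  assume "\<not> 0 < k (x, y)"
  then have "covers S (Inl x) (Inl y)" using assms(1) Inl_E_Inl covers_subdiv_iff by simp
  then have "\<not> (\<exists>z \<in> fst S. pless S (Inl x) z \<and> pless S z (Inl y))"
    unfolding covers_def by simp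
  moreover have "u \<in> fst S" using assms(2) pless_subdiv_iff by simp
  ultimately show False using assms(2,3) by blast
qed

end

context finite_poset
begin

abbreviation N_indicator :: "'a \<times> 'a \<Rightarrow> nat" where
  "N_indicator \<equiv> \<lambda>e. if e \<in> N_diag (A, r) then 1 else 0"

lemma N_free_SN_iff: "N_free (SN (A, r)) \<longleftrightarrow> (\<forall>b c. (b, c) \<notin> N_diag (A, r) \<longrightarrow> N_clean (A, r) b c)"
proof -
  interpret subdivision A r N_indicator ..
  show ?thesis unfolding SN_def N_free_subdiv_iff N_clean_def by auto
qed

lemma N_diag_SN_Inl_iff:
  "(Inl b, Inl c) \<in> N_diag (SN (A, r)) \<longleftrightarrow> (b, c) \<notin> N_diag (A, r) \<and> \<not> N_clean (A, r) b c"
proof -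
  interpret subdivision A r N_indicator ..
  show ?thesis unfolding SN_def N_diag_subdiv_Inl_iff N_clean_def by auto
qed

lemma finite_poset_SN: "finite_poset (fst (SN (A, r))) (snd (SN (A, r)))"
proof -
  interpret subdivision A r N_indicator ..
  show ?thesis unfolding SN_def using finite_poset_subdiv by simp
qed

lemma N_free_SN_SN: "N_free (SN (SN (A, r)))"
proof -
  interpret sub: subdivision A r N_indicator ..
  interpret SN: finite_poset "fst (SN (A, r))" "snd (SN (A, r))" by (rule finite_poset_SN)
  have SN_eq: "SN (A, r) = sub.S" unfolding SN_def ..
  have "N_clean (SN (A, r)) b' c'" if "(b', c') \<notin> N_diag (SN (A, r))" for b' c'
    unfolding N_clean_def
  proof (intro allI impI)
    fix a' d' assume "N_config (SN (A, r)) a' b' c' d'"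
    then obtain a b c d where nodes: "b' = Inl b" "c' = Inl c"
        "a' = sd_node N_indicator a c (N_indicator (a, c))" "d' = sd_node N_indicator b d 1"
      and abcd: "N_config (A, r) a b c d" and "N_indicator (b, c) = 0"
      unfolding SN_eq sub.N_config_subdiv_iff by blast
    then have clean: "N_clean (A, r) b c"
      using that N_diag_SN_Inl_iff by (simp split: if_splits)
    then have "(a, c) \<notin> N_diag (A, r)" "(b, d) \<notin> N_diag (A, r)" "(a, d) \<in> r"
      using abcd unfolding N_clean_def by auto
    moreover from this have "(a', d') \<in> snd (SN (A, r))"
      using nodes sub.N_config_subdiv_order[OF abcd] unfolding SN_eq by simp
    ultimately have "a' = Inl a" "d' = Inl d" "(a', d') \<in> snd (SN (A, r))"
      using nodes by (simp_all add: sd_node_def)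
    moreover have "N_clean (A, r) a c" "N_clean (A, r) b d"
      using N_clean_left[OF clean abcd] N_clean_right[OF clean abcd] .
    ultimately show "(a', c') \<notin> N_diag (SN (A, r)) \<and> (b', d') \<notin> N_diag (SN (A, r)) \<and>
        (a', d') \<in> snd (SN (A, r))"
      using nodes N_diag_SN_Inl_iff by auto
  qed
  then show ?thesis using SN.N_free_SN_iff by simp
qed

lemma not_N_clean_if_between_SN_SN:
  assumes "(x, y) \<in> Diag (A, r)"
    and "pless (SN (SN (A, r))) (Inl (Inl x)) u" "pless (SN (SN (A, r))) u (Inl (Inl y))"
  shows "\<not> N_clean (A, r) x y"
proof (cases "(x, y) \<in> N_diag (A, r)")
  case True
  then show ?thesis by (rule N_diag_imp_not_N_clean)
next
  case False
  interpret sub: subdivision A r N_indicator ..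
  interpret SN: finite_poset "fst (SN (A, r))" "snd (SN (A, r))" by (rule finite_poset_SN)
  interpret sub2: subdivision "fst (SN (A, r))" "snd (SN (A, r))" SN.N_indicator ..
  have "covers (SN (A, r)) (Inl x) (Inl y)"
    using assms(1) False sub.covers_subdiv_iff sub.Inl_E_Inl unfolding SN_def Diag_def by simp
  then have "0 < SN.N_indicator (Inl x, Inl y)"
    using sub2.subdivided_if_between assms(2,3) unfolding SN_def[of "SN (A, r)"] by simp
  then show ?thesis using N_diag_SN_Inl_iff by (simp split: if_splits)
qed

lemma subdivided_if_not_N_clean:
  assumes "N_free (subdiv (A, r) k)" and "\<not> N_clean (A, r) b c"
  shows "0 < k (b, c)"
proof -
  interpret subdivision A r k ..
  have no_N: "k (b, c) = 0 \<Longrightarrow> k (a, c) = 0 \<and> k (b, d) = 0 \<and> (a, d) \<in> r"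
    if "N_config (A, r) a b c d" for a b c d
    using assms(1) that unfolding N_free_subdiv_iff by blast
  have N_diag_subdivided: "0 < k (b, c)" if "(b, c) \<in> N_diag (A, r)" for b c
    using that no_N unfolding N_diag_def is_N_iff by blast
  obtain a d where "N_config (A, r) a b c d"
    and "(a, c) \<in> N_diag (A, r) \<or> (b, d) \<in> N_diag (A, r) \<or> (a, d) \<notin> r"
    using assms(2) unfolding N_clean_def by auto
  then show ?thesis using no_N N_diag_subdivided by fastforce
qed

end

theorem theorem1:
  fixes A :: "'a set" and r :: "'a rel"
  assumes "finite A" and "partial_order_on A r"
  shows "N_free (SN (SN (A, r))) \<and>
    (\<forall>k :: 'a \<times> 'a \<Rightarrow> nat. N_free (subdiv (A, r) k) \<longrightarrow>
       (\<forall>x y. (x, y) \<in> Diag (A, r) \<and>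
          (\<exists>u \<in> fst (SN (SN (A, r))). u \<notin> range (Inl \<circ> Inl) \<and>
             pless (SN (SN (A, r))) (Inl (Inl x)) u \<and> pless (SN (SN (A, r))) u (Inl (Inl y)))
          \<longrightarrow> 1 \<le> k (x, y)))"
proof -
  interpret finite_poset A r using assms by unfold_locales
  show ?thesis
    using N_free_SN_SN not_N_clean_if_between_SN_SN subdivided_if_not_N_clean
    by (metis One_nat_def Suc_leI)
qed

end
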